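(* Let $G=G_+G_-$ be a unique factorization of a finite group $G$ and let $\xi,\eta:G_+\to G_-$ be group homomorphisms. Put $G_+'=\{u\xi(u^{-1}):u\in G_+\}$, $G_+''=\{\eta(u^{-1})u:u\in G_+\}$ and $F:G_+'\to G_+''$, $F(u\xi(u^{-1}))=\eta(u)u^{-1}$. Then the conjunction of the conditions (a) $G_+'$ and $G_+''$ are normal subgroups of $G$, and (b) $F$ is a group isomorphism, is equivalent to the following identities holding for all $u,v\in G_+$ and $x\in G_-$: \begin{align*} &(1)\ \xi(u)^v=\xi(u^{\eta(v)}),\qquad (2)\ {}^u\eta(v)=\eta({}^{\xi(u)}v),\qquad (3)\ uv=({}^{\xi(u)}v)(u^{\eta(v)}),\\ &(4)\ \xi({}^x u)\,x^u=x\,\xi(u),\qquad (5)\ \eta({}^x u)\,x^u=x\,\eta(u). \end{align*} Moreover, for each $i\in\{1,\dots,5\}$, identity $(i)$ (for all $u,v\in G_+$, $x\in G_-$) is equivalent to identity $(i')$ (for all $u,v\in G_+$, $x\in G_-$), where \begin{align*} &(1')\ {}^v\xi(u)=\xi({}^{\eta(v)}u),\qquad (2')\ \eta(v)^u=\eta(v^{\xi(u)}),\qquad (3')\ uv=({}^{\eta(u)}v)(u^{\xi(v)}),\\ &(4')\ {}^u x\,\xi(u^x)=\xi(u)\,x,\qquad (5')\ {}^u x\,\eta(u^x)=\eta(u)\,x. \end{align*}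
   Context: A unique factorization $G=G_+G_-$ consists of subgroups $G_+,G_-$ of $G$ such that every $g\in G$ can be written uniquely as $g=g_+g_-$ with $g_+\in G_+$, $g_-\in G_-$. For $u\in G_+$ and $x\in G_-$ define ${}^u x\in G_-$, $u^x\in G_+$, ${}^x u\in G_+$, $x^u\in G_-$ by $ux=({}^u x)(u^x)$ and $xu=({}^x u)(x^u)$ (unique factorizations in $G=G_-G_+$ and $G=G_+G_-$ respectively). *)

theory Defs
  imports "HOL-Algebra.Algebra"
begin

definition unique_factorization :: "('g, 'b) monoid_scheme \<Rightarrow> 'g set \<Rightarrow> 'g set \<Rightarrow> bool" where
  "unique_factorization G Gp Gm \<longleftrightarrow> subgroup Gp G \<and> subgroup Gm G \<and>
     (\<forall>g\<in>carrier G. \<exists>!p. fst p \<in> Gp \<and> snd p \<in> Gm \<and> g = fst p \<otimes>\<^bsub>G\<^esub> snd p)"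

definition lact_pm :: "('g, 'b) monoid_scheme \<Rightarrow> 'g set \<Rightarrow> 'g set \<Rightarrow> 'g \<Rightarrow> 'g \<Rightarrow> 'g" where
  "lact_pm G Gp Gm u x = fst (THE p. fst p \<in> Gm \<and> snd p \<in> Gp \<and> u \<otimes>\<^bsub>G\<^esub> x = fst p \<otimes>\<^bsub>G\<^esub> snd p)"

definition ract_pm :: "('g, 'b) monoid_scheme \<Rightarrow> 'g set \<Rightarrow> 'g set \<Rightarrow> 'g \<Rightarrow> 'g \<Rightarrow> 'g" where
  "ract_pm G Gp Gm u x = snd (THE p. fst p \<in> Gm \<and> snd p \<in> Gp \<and> u \<otimes>\<^bsub>G\<^esub> x = fst p \<otimes>\<^bsub>G\<^esub> snd p)"

definition lact_mp :: "('g, 'b) monoid_scheme \<Rightarrow> 'g set \<Rightarrow> 'g set \<Rightarrow> 'g \<Rightarrow> 'g \<Rightarrow> 'g" where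
  "lact_mp G Gp Gm x u = fst (THE p. fst p \<in> Gp \<and> snd p \<in> Gm \<and> x \<otimes>\<^bsub>G\<^esub> u = fst p \<otimes>\<^bsub>G\<^esub> snd p)"

definition ract_mp :: "('g, 'b) monoid_scheme \<Rightarrow> 'g set \<Rightarrow> 'g set \<Rightarrow> 'g \<Rightarrow> 'g \<Rightarrow> 'g" where
  "ract_mp G Gp Gm x u = snd (THE p. fst p \<in> Gp \<and> snd p \<in> Gm \<and> x \<otimes>\<^bsub>G\<^esub> u = fst p \<otimes>\<^bsub>G\<^esub> snd p)"

end

theory Submission
  imports Defs
begin

(*
  For a homomorphism phi : G+ -> G-, the set Q = {u phi(u)^-1 | u in G+} meets each coset p G- in
  exactly one point, so p m (p in G+, m in G-) lies in Q iff m = phi(p)^-1.  Conjugating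
  u phi(u)^-1 by x in G- and refactoring x u = (^x u)(x^u) shows that identity (4) for phi says
  precisely that G- normalizes Q; this already forces Q to be a subgroup, and Q is then normal
  because G = Q G-.  So (4) and (5) express the normality of G+' = Q_xi and of
  G+'' = (Q_eta)^-1.  When Q_xi is a subgroup, u xi(u)^-1 times v' xi(v')^-1 with
  v' = ^xi(u) v equals u v xi(u v)^-1; comparing F of this product with the product of
  the images, and using uniqueness of the G- G+ factorization of u eta(v), shows that F is
  multiplicative iff (2) and (3) hold.  F is always a bijection G+' -> G+'', and (1) follows by
  applying xi to (3) and using (4).  Each (i) is equivalent to (i') because inverting
  u x = (^u x)(u^x) gives the factorization of x^-1 u^-1, so (i) at inverted arguments is (i').
*)

lemma (in group) inv_eq_inv_iff [simp]:
  "x \<in> carrier G \<Longrightarrow> y \<in> carrier G \<Longrightarrow> inv x = inv y \<longleftrightarrow> x = y"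
  by (metis inv_inv)

lemma (in group) inv_mult_cancel [simp]:
  "x \<in> carrier G \<Longrightarrow> y \<in> carrier G \<Longrightarrow> inv x \<otimes> (x \<otimes> y) = y"
  by (simp flip: m_assoc)

lemma (in group) mult_inv_cancel [simp]:
  "x \<in> carrier G \<Longrightarrow> y \<in> carrier G \<Longrightarrow> x \<otimes> (inv x \<otimes> y) = y"
  by (simp flip: m_assoc)

lemma (in group) subgroup_ball2_inv_iff:
  assumes "subgroup H G" "subgroup K G"
  shows "(\<forall>h\<in>H. \<forall>k\<in>K. P (inv h) (inv k)) \<longleftrightarrow> (\<forall>h\<in>H. \<forall>k\<in>K. P h k)"
proof
  assume A: "\<forall>h\<in>H. \<forall>k\<in>K. P (inv h) (inv k)"
  show "\<forall>h\<in>H. \<forall>k\<in>K. P h k"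
  proof (intro ballI)
    fix h k
    assume "h \<in> H" "k \<in> K"
    with A have "P (inv (inv h)) (inv (inv k))"
      using assms by (simp add: subgroup.m_inv_closed)
    then show "P h k"
      using assms \<open>h \<in> H\<close> \<open>k \<in> K\<close> by (simp add: subgroup.mem_carrier)
  qed
next
  assume "\<forall>h\<in>H. \<forall>k\<in>K. P h k"
  then show "\<forall>h\<in>H. \<forall>k\<in>K. P (inv h) (inv k)"
    using assms by (simp add: subgroup.m_inv_closed)
qed

lemma (in group) normal_inv_image_iff:
  assumes "S \<subseteq> carrier G"
  shows "(\<lambda>x. inv x) ` S \<lhd> G \<longleftrightarrow> S \<lhd> G"
proof -
  have inv_image_subgroup: "(\<lambda>x. inv x) ` H = H" if "subgroup H G" for H
    using that subgroup.m_inv_closed subgroup.mem_carrier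
    by (force intro: image_eqI[where x="inv _"])
  have "(\<lambda>x. inv x) ` (\<lambda>x. inv x) ` S = S"
    using assms by (force simp: image_image)
  then show ?thesis
    using inv_image_subgroup normal_imp_subgroup by metis
qed

locale factorization = group G for G (structure) +
  fixes Gp Gm :: "'a set"
  assumes unique_factorization: "unique_factorization G Gp Gm"
begin

lemma Gp_subgroup: "subgroup Gp G" and Gm_subgroup: "subgroup Gm G"
  using unique_factorization by (auto simp: unique_factorization_def)

sublocale Gp: subgroup Gp G by (rule Gp_subgroup)
sublocale Gm: subgroup Gm G by (rule Gm_subgroup)

lemma factor_pm_exists:
  assumes "g \<in> carrier G"
  obtains p m where "p \<in> Gp" "m \<in> Gm" "g = p \<otimes> m"
  using unique_factorization assms unfolding unique_factorization_def by blast

lemma factor_pm_unique: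
  assumes "p \<in> Gp" "p' \<in> Gp" "m \<in> Gm" "m' \<in> Gm" "p \<otimes> m = p' \<otimes> m'"
  shows "p = p'" "m = m'"
proof -
  have "\<exists>!q. fst q \<in> Gp \<and> snd q \<in> Gm \<and> p \<otimes> m = fst q \<otimes> snd q"
    using unique_factorization assms unfolding unique_factorization_def by simp
  then have "(p, m) = (p', m')"
    using assms by (metis fst_conv snd_conv)
  then show "p = p'" "m = m'" by simp_all
qed

lemma factor_mp_exists:
  assumes "g \<in> carrier G"
  obtains m p where "m \<in> Gm" "p \<in> Gp" "g = m \<otimes> p"
proof -
  obtain p m where "p \<in> Gp" "m \<in> Gm" "inv g = p \<otimes> m"
    using factor_pm_exists[of "inv g"] assms by auto
  then have "g = inv (p \<otimes> m)"
    using assms by (metis inv_inv)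
  then have "g = inv m \<otimes> inv p"
    by (simp add: inv_mult_group \<open>p \<in> Gp\<close> \<open>m \<in> Gm\<close>)
  then show thesis
    using that \<open>p \<in> Gp\<close> \<open>m \<in> Gm\<close> by blast
qed

lemma factor_mp_unique:
  assumes "m \<in> Gm" "m' \<in> Gm" "p \<in> Gp" "p' \<in> Gp" "m \<otimes> p = m' \<otimes> p'"
  shows "m = m'" "p = p'"
proof -
  have "inv p \<otimes> inv m = inv p' \<otimes> inv m'"
    using assms by (simp add: inv_mult_group[symmetric])
  then show "m = m'" "p = p'"
    using factor_pm_unique[of "inv p" "inv p'" "inv m" "inv m'"] assms by simp_all
qed

abbreviation "lpm \<equiv> lact_pm G Gp Gm"
abbreviation "rpm \<equiv> ract_pm G Gp Gm"
abbreviation "lmp \<equiv> lact_mp G Gp Gm"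
abbreviation "rmp \<equiv> ract_mp G Gp Gm"

lemma pm_actions_eqI:
  assumes "u \<otimes> x = m \<otimes> p" "m \<in> Gm" "p \<in> Gp"
  shows "lpm u x = m" "rpm u x = p"
proof -
  have "(THE q. fst q \<in> Gm \<and> snd q \<in> Gp \<and> u \<otimes> x = fst q \<otimes> snd q) = (m, p)"
    using assms factor_mp_unique by (intro the_equality) auto
  then show "lpm u x = m" "rpm u x = p"
    by (simp_all add: lact_pm_def ract_pm_def)
qed

lemma mp_actions_eqI:
  assumes "x \<otimes> u = p \<otimes> m" "p \<in> Gp" "m \<in> Gm"
  shows "lmp x u = p" "rmp x u = m"
proof -
  have "(THE q. fst q \<in> Gp \<and> snd q \<in> Gm \<and> x \<otimes> u = fst q \<otimes> snd q) = (p, m)"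
    using assms factor_pm_unique by (intro the_equality) auto
  then show "lmp x u = p" "rmp x u = m"
    by (simp_all add: lact_mp_def ract_mp_def)
qed

lemma pm_actions:
  assumes "u \<in> Gp" "x \<in> Gm"
  shows "lpm u x \<in> Gm" "rpm u x \<in> Gp" "u \<otimes> x = lpm u x \<otimes> rpm u x"
proof -
  obtain m p where "m \<in> Gm" "p \<in> Gp" "u \<otimes> x = m \<otimes> p"
    using factor_mp_exists[of "u \<otimes> x"] assms by auto
  then show "lpm u x \<in> Gm" "rpm u x \<in> Gp" "u \<otimes> x = lpm u x \<otimes> rpm u x"
    using pm_actions_eqI by simp_all
qed

lemma mp_actions:
  assumes "u \<in> Gp" "x \<in> Gm"
  shows "lmp x u \<in> Gp" "rmp x u \<in> Gm" "x \<otimes> u = lmp x u \<otimes> rmp x u"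
proof -
  obtain p m where "p \<in> Gp" "m \<in> Gm" "x \<otimes> u = p \<otimes> m"
    using factor_pm_exists[of "x \<otimes> u"] assms by auto
  then show "lmp x u \<in> Gp" "rmp x u \<in> Gm" "x \<otimes> u = lmp x u \<otimes> rmp x u"
    using mp_actions_eqI by simp_all
qed

lemma mp_actions_inv [simp]:
  assumes "u \<in> Gp" "x \<in> Gm"
  shows "lmp (inv x) (inv u) = inv (rpm u x)" "rmp (inv x) (inv u) = inv (lpm u x)"
proof -
  have "inv x \<otimes> inv u = inv (rpm u x) \<otimes> inv (lpm u x)"
    using pm_actions[OF assms] assms by (simp flip: inv_mult_group)
  then show "lmp (inv x) (inv u) = inv (rpm u x)" "rmp (inv x) (inv u) = inv (lpm u x)"
    using mp_actions_eqI pm_actions[OF assms] by simp_all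
qed

lemma pm_actions_inv [simp]:
  assumes "u \<in> Gp" "x \<in> Gm"
  shows "lpm (inv u) (inv x) = inv (rmp x u)" "rpm (inv u) (inv x) = inv (lmp x u)"
proof -
  have "inv u \<otimes> inv x = inv (rmp x u) \<otimes> inv (lmp x u)"
    using mp_actions[OF assms] assms by (simp flip: inv_mult_group)
  then show "lpm (inv u) (inv x) = inv (rmp x u)" "rpm (inv u) (inv x) = inv (lmp x u)"
    using pm_actions_eqI mp_actions[OF assms] by simp_all
qed

lemma lact_mp_lact_mp_inv:
  assumes "x \<in> Gm" "v \<in> Gp"
  shows "lmp x (lmp (inv x) v) = v"
proof -
  note a = mp_actions[OF assms(2) Gm.m_inv_closed[OF assms(1)]]
  have "lmp (inv x) v = inv x \<otimes> v \<otimes> inv (rmp (inv x) v)"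
    using a assms by (simp add: inv_solve_right)
  then have "x \<otimes> lmp (inv x) v = v \<otimes> inv (rmp (inv x) v)"
    using a(2) assms by (simp add: m_assoc)
  from mp_actions_eqI(1)[OF this] show ?thesis
    using a(2) assms by simp
qed

end

locale factorization_hom = factorization +
  fixes \<phi>
  assumes phi_hom: "\<phi> \<in> hom (G\<lparr>carrier := Gp\<rparr>) (G\<lparr>carrier := Gm\<rparr>)"
begin

lemma phi_closed [simp]: "u \<in> Gp \<Longrightarrow> \<phi> u \<in> Gm"
  using phi_hom by (auto simp: hom_def)

lemma phi_mult: "u \<in> Gp \<Longrightarrow> v \<in> Gp \<Longrightarrow> \<phi> (u \<otimes> v) = \<phi> u \<otimes> \<phi> v"
  using phi_hom by (auto simp: hom_def)

lemma phi_group_hom: "group_hom (G\<lparr>carrier := Gp\<rparr>) (G\<lparr>carrier := Gm\<rparr>) \<phi>"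
  using Gp.subgroup_is_group Gm.subgroup_is_group phi_hom is_group
  by (simp add: group_hom_def group_hom_axioms_def)

lemma phi_one [simp]: "\<phi> \<one> = \<one>"
  using group_hom.hom_one[OF phi_group_hom] by simp

lemma phi_inv [simp]: "u \<in> Gp \<Longrightarrow> \<phi> (inv u) = inv (\<phi> u)"
  using group_hom.hom_inv[OF phi_group_hom, of u] Gp_subgroup Gm_subgroup by simp

lemma phi_compat_mp_iff_pm:
  "(\<forall>u\<in>Gp. \<forall>x\<in>Gm. \<phi> (lmp x u) \<otimes> rmp x u = x \<otimes> \<phi> u) \<longleftrightarrow>
   (\<forall>u\<in>Gp. \<forall>x\<in>Gm. lpm u x \<otimes> \<phi> (rpm u x) = \<phi> u \<otimes> x)"
proof -
  have inv_instance: "\<phi> (lmp (inv x) (inv u)) \<otimes> rmp (inv x) (inv u) = inv x \<otimes> \<phi> (inv u)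
        \<longleftrightarrow> lpm u x \<otimes> \<phi> (rpm u x) = \<phi> u \<otimes> x" if "u \<in> Gp" "x \<in> Gm" for u x
  proof -
    note a = pm_actions[OF that]
    have "\<phi> (lmp (inv x) (inv u)) \<otimes> rmp (inv x) (inv u) = inv (lpm u x \<otimes> \<phi> (rpm u x))"
      using a that by (simp add: inv_mult_group)
    moreover have "inv x \<otimes> \<phi> (inv u) = inv (\<phi> u \<otimes> x)"
      using that by (simp add: inv_mult_group)
    ultimately show ?thesis
      using a that by simp
  qed
  show ?thesis
    by (subst subgroup_ball2_inv_iff[OF Gp_subgroup Gm_subgroup, symmetric])
      (use inv_instance in blast)
qed

definition twisted_Gp :: "'a set" where
  "twisted_Gp = {u \<otimes> \<phi> (inv u) | u. u \<in> Gp}"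

lemma twisted_Gp_iff: "q \<in> twisted_Gp \<longleftrightarrow> (\<exists>u\<in>Gp. q = u \<otimes> inv (\<phi> u))"
  unfolding twisted_Gp_def by (simp add: conj_commute cong: conj_cong) blast

lemma twisted_Gp_memI: "u \<in> Gp \<Longrightarrow> u \<otimes> inv (\<phi> u) \<in> twisted_Gp"
  by (auto simp: twisted_Gp_iff)

lemma twisted_GpE:
  assumes "q \<in> twisted_Gp"
  obtains u where "u \<in> Gp" "q = u \<otimes> inv (\<phi> u)"
  using assms by (auto simp: twisted_Gp_iff)

lemma twisted_Gp_subset: "twisted_Gp \<subseteq> carrier G"
  by (auto simp: twisted_Gp_iff)

lemma factor_mem_twisted_Gp_iff:
  assumes "p \<in> Gp" "m \<in> Gm"
  shows "p \<otimes> m \<in> twisted_Gp \<longleftrightarrow> m = inv (\<phi> p)"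
proof
  assume "p \<otimes> m \<in> twisted_Gp"
  then obtain u where "u \<in> Gp" "p \<otimes> m = u \<otimes> inv (\<phi> u)"
    by (auto simp: twisted_Gp_iff)
  then show "m = inv (\<phi> p)"
    using factor_pm_unique[of p u m "inv (\<phi> u)"] assms by simp
qed (auto simp: twisted_Gp_iff assms)

lemma conj_mem_twisted_Gp_iff:
  assumes "u \<in> Gp" "x \<in> Gm"
  shows "x \<otimes> (u \<otimes> inv (\<phi> u)) \<otimes> inv x \<in> twisted_Gp \<longleftrightarrow> \<phi> (lmp x u) \<otimes> rmp x u = x \<otimes> \<phi> u"
proof -
  note a = mp_actions[OF assms]
  have "x \<otimes> (u \<otimes> inv (\<phi> u)) \<otimes> inv x = (x \<otimes> u) \<otimes> (inv (\<phi> u) \<otimes> inv x)"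
    using assms by (simp add: m_assoc)
  also have "\<dots> = lmp x u \<otimes> (rmp x u \<otimes> inv (\<phi> u) \<otimes> inv x)"
    using a assms by (simp add: m_assoc)
  also have "\<dots> \<in> twisted_Gp \<longleftrightarrow> rmp x u \<otimes> inv (\<phi> u) \<otimes> inv x = inv (\<phi> (lmp x u))"
    using a assms by (simp add: factor_mem_twisted_Gp_iff)
  also have "\<dots> \<longleftrightarrow> \<phi> (lmp x u) \<otimes> rmp x u = x \<otimes> \<phi> u"
    using a assms by (simp add: inv_solve_right' inv_solve_left m_assoc flip: inv_mult_group) (simp only: eq_commute)
  finally show ?thesis .
qed

lemma twisted_Gp_Gm_conj_closed_iff:
  "(\<forall>x\<in>Gm. \<forall>q\<in>twisted_Gp. x \<otimes> q \<otimes> inv x \<in> twisted_Gp) \<longleftrightarrow>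
   (\<forall>u\<in>Gp. \<forall>x\<in>Gm. \<phi> (lmp x u) \<otimes> rmp x u = x \<otimes> \<phi> u)"
proof (intro iffI ballI)
  fix u x
  assume "\<forall>x\<in>Gm. \<forall>q\<in>twisted_Gp. x \<otimes> q \<otimes> inv x \<in> twisted_Gp" "u \<in> Gp" "x \<in> Gm"
  then show "\<phi> (lmp x u) \<otimes> rmp x u = x \<otimes> \<phi> u"
    using conj_mem_twisted_Gp_iff twisted_Gp_memI by blast
next
  fix x q
  assume "\<forall>u\<in>Gp. \<forall>x\<in>Gm. \<phi> (lmp x u) \<otimes> rmp x u = x \<otimes> \<phi> u" "x \<in> Gm" "q \<in> twisted_Gp"
  then show "x \<otimes> q \<otimes> inv x \<in> twisted_Gp"
    using conj_mem_twisted_Gp_iff by (auto elim: twisted_GpE)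
qed

lemma twisted_Gp_mult_closed_if_Gm_conj_closed:
  assumes conj: "\<forall>x\<in>Gm. \<forall>q\<in>twisted_Gp. x \<otimes> q \<otimes> inv x \<in> twisted_Gp"
    and a: "a \<in> twisted_Gp" and b: "b \<in> twisted_Gp"
  shows "a \<otimes> b \<in> twisted_Gp"
proof -
  obtain u where u: "u \<in> Gp" "a = u \<otimes> inv (\<phi> u)"
    using a by (rule twisted_GpE)
  have "inv (\<phi> u) \<in> Gm"
    using u(1) by simp
  with conj b have "inv (\<phi> u) \<otimes> b \<otimes> inv (inv (\<phi> u)) \<in> twisted_Gp"
    by blast
  then obtain w where w: "w \<in> Gp" "inv (\<phi> u) \<otimes> b \<otimes> \<phi> u = w \<otimes> inv (\<phi> w)"
    using u(1) by (auto elim: twisted_GpE)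
  have "b \<in> carrier G"
    using b twisted_Gp_subset by blast
  then have "a \<otimes> b = u \<otimes> (inv (\<phi> u) \<otimes> b \<otimes> \<phi> u) \<otimes> inv (\<phi> u)"
    using u by (simp add: m_assoc)
  also have "\<dots> = (u \<otimes> w) \<otimes> inv (\<phi> (u \<otimes> w))"
    using u w by (simp add: phi_mult inv_mult_group m_assoc)
  finally show ?thesis
    using u w by (simp add: twisted_Gp_memI)
qed

lemma twisted_Gp_inv_closed_if_Gm_conj_closed:
  assumes conj: "\<forall>x\<in>Gm. \<forall>q\<in>twisted_Gp. x \<otimes> q \<otimes> inv x \<in> twisted_Gp"
    and a: "a \<in> twisted_Gp"
  shows "inv a \<in> twisted_Gp"
proof -
  obtain u where u: "u \<in> Gp" "a = u \<otimes> inv (\<phi> u)"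
    using a by (rule twisted_GpE)
  have "inv a = \<phi> u \<otimes> (inv u \<otimes> inv (\<phi> (inv u))) \<otimes> inv (\<phi> u)"
    using u by (simp add: inv_mult_group m_assoc)
  moreover have "inv u \<otimes> inv (\<phi> (inv u)) \<in> twisted_Gp"
    using u by (simp only: twisted_Gp_memI Gp.m_inv_closed)
  ultimately show ?thesis
    using conj u by simp
qed

lemma twisted_Gp_normal_iff_Gm_conj_closed:
  "twisted_Gp \<lhd> G \<longleftrightarrow> (\<forall>x\<in>Gm. \<forall>q\<in>twisted_Gp. x \<otimes> q \<otimes> inv x \<in> twisted_Gp)"
proof
  assume "twisted_Gp \<lhd> G"
  then show "\<forall>x\<in>Gm. \<forall>q\<in>twisted_Gp. x \<otimes> q \<otimes> inv x \<in> twisted_Gp"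
    by (simp add: normal.inv_op_closed2)
next
  assume conj: "\<forall>x\<in>Gm. \<forall>q\<in>twisted_Gp. x \<otimes> q \<otimes> inv x \<in> twisted_Gp"
  note mult = twisted_Gp_mult_closed_if_Gm_conj_closed[OF conj]
    and inv = twisted_Gp_inv_closed_if_Gm_conj_closed[OF conj]
  have "\<one> \<in> twisted_Gp"
    using twisted_Gp_memI[of \<one>] by simp
  then have subgroup: "subgroup twisted_Gp G"
    using twisted_Gp_subset mult inv by (intro subgroupI) auto
  have "g \<otimes> q \<otimes> inv g \<in> twisted_Gp" if g: "g \<in> carrier G" and q: "q \<in> twisted_Gp" for g q
  proof -
    obtain p m where pm: "p \<in> Gp" "m \<in> Gm" "g = p \<otimes> m"
      using factor_pm_exists g by blast
    define a where "a = p \<otimes> inv (\<phi> p)"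
    define y where "y = \<phi> p \<otimes> m"
    have a: "a \<in> twisted_Gp" and y: "y \<in> Gm"
      using pm by (simp_all add: a_def y_def twisted_Gp_memI)
    have "a \<in> carrier G" "q \<in> carrier G"
      using a q twisted_Gp_subset by blast+
    have "g = a \<otimes> y"
      using pm by (simp add: a_def y_def m_assoc)
    then have "g \<otimes> q \<otimes> inv g = a \<otimes> (y \<otimes> q \<otimes> inv y) \<otimes> inv a"
      using \<open>a \<in> carrier G\<close> \<open>q \<in> carrier G\<close> y by (simp add: inv_mult_group m_assoc)
    moreover have "y \<otimes> q \<otimes> inv y \<in> twisted_Gp"
      using conj y q by blast
    ultimately show ?thesis
      using a mult inv by simp
  qed
  with subgroup show "twisted_Gp \<lhd> G"
    by (simp add: normal_inv_iff)
qed

lemma twisted_Gp_normal_iff: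
  "twisted_Gp \<lhd> G \<longleftrightarrow> (\<forall>u\<in>Gp. \<forall>x\<in>Gm. \<phi> (lmp x u) \<otimes> rmp x u = x \<otimes> \<phi> u)"
  by (simp only: twisted_Gp_normal_iff_Gm_conj_closed twisted_Gp_Gm_conj_closed_iff)

lemma twisted_Gp_mult_eq:
  assumes "subgroup twisted_Gp G" "u \<in> Gp" "v \<in> Gp"
  shows "(u \<otimes> inv (\<phi> u)) \<otimes> (lmp (\<phi> u) v \<otimes> inv (\<phi> (lmp (\<phi> u) v))) = (u \<otimes> v) \<otimes> inv (\<phi> (u \<otimes> v))"
proof -
  define v' where "v' = lmp (\<phi> u) v"
  define r where "r = rmp (\<phi> u) v"
  have v': "v' \<in> Gp" and r: "r \<in> Gm" and "\<phi> u \<otimes> v = v' \<otimes> r"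
    using mp_actions[OF assms(3) phi_closed[OF assms(2)]] by (simp_all add: v'_def r_def)
  then have "v' = \<phi> u \<otimes> v \<otimes> inv r"
    using assms by (simp add: inv_solve_right)
  then have "inv (\<phi> u) \<otimes> v' = v \<otimes> inv r"
    using assms r by (simp add: m_assoc)
  have "(u \<otimes> inv (\<phi> u)) \<otimes> (v' \<otimes> inv (\<phi> v')) = u \<otimes> (inv (\<phi> u) \<otimes> v') \<otimes> inv (\<phi> v')"
    using assms v' by (simp add: m_assoc)
  also have "\<dots> = (u \<otimes> v) \<otimes> (inv r \<otimes> inv (\<phi> v'))"
    using assms v' r \<open>inv (\<phi> u) \<otimes> v' = v \<otimes> inv r\<close> by (simp add: m_assoc)
  finally have prod: "(u \<otimes> inv (\<phi> u)) \<otimes> (v' \<otimes> inv (\<phi> v')) = (u \<otimes> v) \<otimes> (inv r \<otimes> inv (\<phi> v'))" .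
  moreover have "(u \<otimes> inv (\<phi> u)) \<otimes> (v' \<otimes> inv (\<phi> v')) \<in> twisted_Gp"
    using assms v' by (simp add: subgroup.m_closed twisted_Gp_memI)
  ultimately have "inv r \<otimes> inv (\<phi> v') = inv (\<phi> (u \<otimes> v))"
    using assms v' r by (simp add: factor_mem_twisted_Gp_iff)
  with prod show ?thesis
    by (simp add: v'_def)
qed

definition cotwisted_Gp :: "'a set" where
  "cotwisted_Gp = {\<phi> (inv u) \<otimes> u | u. u \<in> Gp}"

lemma cotwisted_Gp_eq_inv_image: "cotwisted_Gp = (\<lambda>q. inv q) ` twisted_Gp"
proof (intro equalityI subsetI)
  fix z
  assume "z \<in> cotwisted_Gp"
  then obtain u where u: "u \<in> Gp" "z = \<phi> (inv u) \<otimes> u"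
    by (auto simp: cotwisted_Gp_def)
  then have "z = inv (inv u \<otimes> inv (\<phi> (inv u)))"
    by (simp add: inv_mult_group)
  moreover have "inv u \<otimes> inv (\<phi> (inv u)) \<in> twisted_Gp"
    using u by (simp only: twisted_Gp_memI Gp.m_inv_closed)
  ultimately show "z \<in> (\<lambda>q. inv q) ` twisted_Gp"
    by blast
next
  fix z
  assume "z \<in> (\<lambda>q. inv q) ` twisted_Gp"
  then obtain u where u: "u \<in> Gp" "z = inv (u \<otimes> inv (\<phi> u))"
    by (auto elim: twisted_GpE)
  then have "z = \<phi> (inv (inv u)) \<otimes> inv u"
    by (simp add: inv_mult_group)
  then show "z \<in> cotwisted_Gp"
    using u unfolding cotwisted_Gp_def by blast
qed

lemma cotwisted_Gp_normal_iff: "cotwisted_Gp \<lhd> G \<longleftrightarrow> twisted_Gp \<lhd> G"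
  by (simp add: cotwisted_Gp_eq_inv_image normal_inv_image_iff twisted_Gp_subset)

end

locale factorization_hom_pair = factorization +
  fixes \<xi> \<eta>
  assumes xi_hom: "\<xi> \<in> hom (G\<lparr>carrier := Gp\<rparr>) (G\<lparr>carrier := Gm\<rparr>)"
    and eta_hom: "\<eta> \<in> hom (G\<lparr>carrier := Gp\<rparr>) (G\<lparr>carrier := Gm\<rparr>)"

sublocale factorization_hom_pair \<subseteq> xi: factorization_hom G Gp Gm \<xi>
  by unfold_locales (rule xi_hom)

sublocale factorization_hom_pair \<subseteq> eta: factorization_hom G Gp Gm \<eta>
  by unfold_locales (rule eta_hom)

context factorization_hom_pair
begin

lemma xi_ract_mp_compat_iff:
  "(\<forall>u\<in>Gp. \<forall>v\<in>Gp. rmp (\<xi> u) v = \<xi> (rpm u (\<eta> v))) \<longleftrightarrow>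
   (\<forall>u\<in>Gp. \<forall>v\<in>Gp. lpm v (\<xi> u) = \<xi> (lmp (\<eta> v) u))"
proof -
  have inv_instance: "rmp (\<xi> (inv u)) (inv v) = \<xi> (rpm (inv u) (\<eta> (inv v)))
        \<longleftrightarrow> lpm v (\<xi> u) = \<xi> (lmp (\<eta> v) u)" if "u \<in> Gp" "v \<in> Gp" for u v
    using that pm_actions[of v "\<xi> u"] mp_actions[of u "\<eta> v"] by simp
  show ?thesis
    by (subst subgroup_ball2_inv_iff[OF Gp_subgroup Gp_subgroup, symmetric])
      (use inv_instance in blast)
qed

lemma eta_lact_pm_compat_iff:
  "(\<forall>u\<in>Gp. \<forall>v\<in>Gp. lpm u (\<eta> v) = \<eta> (lmp (\<xi> u) v)) \<longleftrightarrow>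
   (\<forall>u\<in>Gp. \<forall>v\<in>Gp. rmp (\<eta> v) u = \<eta> (rpm v (\<xi> u)))"
proof -
  have inv_instance: "lpm (inv u) (\<eta> (inv v)) = \<eta> (lmp (\<xi> (inv u)) (inv v))
        \<longleftrightarrow> rmp (\<eta> v) u = \<eta> (rpm v (\<xi> u))" if "u \<in> Gp" "v \<in> Gp" for u v
    using that mp_actions[of u "\<eta> v"] pm_actions[of v "\<xi> u"] by simp
  show ?thesis
    by (subst subgroup_ball2_inv_iff[OF Gp_subgroup Gp_subgroup, symmetric])
      (use inv_instance in blast)
qed

lemma mult_factor_xi_eta_iff_eta_xi:
  "(\<forall>u\<in>Gp. \<forall>v\<in>Gp. u \<otimes> v = lmp (\<xi> u) v \<otimes> rpm u (\<eta> v)) \<longleftrightarrow>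
   (\<forall>u\<in>Gp. \<forall>v\<in>Gp. u \<otimes> v = lmp (\<eta> u) v \<otimes> rpm u (\<xi> v))"
proof -
  have inv_instance: "inv v \<otimes> inv u = lmp (\<xi> (inv v)) (inv u) \<otimes> rpm (inv v) (\<eta> (inv u))
        \<longleftrightarrow> u \<otimes> v = lmp (\<eta> u) v \<otimes> rpm u (\<xi> v)" if "u \<in> Gp" "v \<in> Gp" for u v
    using that mp_actions[of v "\<eta> u"] pm_actions[of u "\<xi> v"] by (simp flip: inv_mult_group)
  show ?thesis
    by (subst subgroup_ball2_inv_iff[OF Gp_subgroup Gp_subgroup, symmetric])
      (use inv_instance in blast)
qed

lemma xi_ract_mp_compat_if_mult_factor:
  assumes mult_factor: "\<forall>u\<in>Gp. \<forall>v\<in>Gp. u \<otimes> v = lmp (\<xi> u) v \<otimes> rpm u (\<eta> v)"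
    and xi_compat: "\<forall>u\<in>Gp. \<forall>x\<in>Gm. \<xi> (lmp x u) \<otimes> rmp x u = x \<otimes> \<xi> u"
  shows "\<forall>u\<in>Gp. \<forall>v\<in>Gp. rmp (\<xi> u) v = \<xi> (rpm u (\<eta> v))"
proof (intro ballI)
  fix u v
  assume u: "u \<in> Gp" and v: "v \<in> Gp"
  note mp = mp_actions[OF v xi.phi_closed[OF u]] and pm = pm_actions[OF u eta.phi_closed[OF v]]
  have uv: "u \<otimes> v = lmp (\<xi> u) v \<otimes> rpm u (\<eta> v)"
    using mult_factor u v by blast
  have "\<xi> (lmp (\<xi> u) v) \<otimes> rmp (\<xi> u) v = \<xi> u \<otimes> \<xi> v"
    using xi_compat u v by simp
  also have "\<dots> = \<xi> (u \<otimes> v)"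
    using u v by (simp add: xi.phi_mult)
  also have "\<dots> = \<xi> (lmp (\<xi> u) v) \<otimes> \<xi> (rpm u (\<eta> v))"
    using mp pm by (simp add: uv xi.phi_mult)
  finally show "rmp (\<xi> u) v = \<xi> (rpm u (\<eta> v))"
    using mp pm by simp
qed

lemma F_mult_iff:
  assumes F_eq: "\<And>u. u \<in> Gp \<Longrightarrow> F (u \<otimes> inv (\<xi> u)) = \<eta> u \<otimes> inv u"
    and subgroup: "subgroup xi.twisted_Gp G" and u: "u \<in> Gp" and v: "v \<in> Gp"
  defines "v' \<equiv> lmp (\<xi> u) v"
  shows "F ((u \<otimes> inv (\<xi> u)) \<otimes> (v' \<otimes> inv (\<xi> v'))) = F (u \<otimes> inv (\<xi> u)) \<otimes> F (v' \<otimes> inv (\<xi> v'))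
    \<longleftrightarrow> lpm u (\<eta> v) = \<eta> v' \<and> u \<otimes> v = v' \<otimes> rpm u (\<eta> v)"
proof -
  have v': "v' \<in> Gp"
    using mp_actions u v by (simp add: v'_def)
  note pm = pm_actions[OF u eta.phi_closed[OF v]]
  have "F ((u \<otimes> inv (\<xi> u)) \<otimes> (v' \<otimes> inv (\<xi> v'))) = F (u \<otimes> inv (\<xi> u)) \<otimes> F (v' \<otimes> inv (\<xi> v'))
    \<longleftrightarrow> \<eta> u \<otimes> \<eta> v \<otimes> inv (u \<otimes> v) = \<eta> u \<otimes> inv u \<otimes> (\<eta> v' \<otimes> inv v')"
    using xi.twisted_Gp_mult_eq[OF subgroup u v] u v v' by (simp add: F_eq eta.phi_mult v'_def)
  also have "\<dots> \<longleftrightarrow> \<eta> v' \<otimes> inv v' = u \<otimes> \<eta> v \<otimes> inv (u \<otimes> v)"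
    using u v v' by (simp add: m_assoc inv_solve_left)
  also have "\<dots> \<longleftrightarrow> u \<otimes> \<eta> v = \<eta> v' \<otimes> (inv v' \<otimes> (u \<otimes> v))"
    using u v v' by (simp add: inv_solve_right flip: m_assoc)
  also have "\<dots> \<longleftrightarrow> lpm u (\<eta> v) = \<eta> v' \<and> rpm u (\<eta> v) = inv v' \<otimes> (u \<otimes> v)"
  proof
    assume "u \<otimes> \<eta> v = \<eta> v' \<otimes> (inv v' \<otimes> (u \<otimes> v))"
    from pm_actions_eqI[OF this] show "lpm u (\<eta> v) = \<eta> v' \<and> rpm u (\<eta> v) = inv v' \<otimes> (u \<otimes> v)"
      using u v v' by simp
  qed (use pm(3) in simp)
  also have "\<dots> \<longleftrightarrow> lpm u (\<eta> v) = \<eta> v' \<and> u \<otimes> v = v' \<otimes> rpm u (\<eta> v)"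
    using pm u v v' by (simp add: inv_solve_left)
  finally show ?thesis .
qed

lemma F_mult_closed_iff:
  assumes F_eq: "\<And>u. u \<in> Gp \<Longrightarrow> F (u \<otimes> inv (\<xi> u)) = \<eta> u \<otimes> inv u"
    and subgroup: "subgroup xi.twisted_Gp G"
  shows "(\<forall>a\<in>xi.twisted_Gp. \<forall>b\<in>xi.twisted_Gp. F (a \<otimes> b) = F a \<otimes> F b) \<longleftrightarrow>
    (\<forall>u\<in>Gp. \<forall>v\<in>Gp. lpm u (\<eta> v) = \<eta> (lmp (\<xi> u) v)) \<and>
    (\<forall>u\<in>Gp. \<forall>v\<in>Gp. u \<otimes> v = lmp (\<xi> u) v \<otimes> rpm u (\<eta> v))"
proof
  assume mult: "\<forall>a\<in>xi.twisted_Gp. \<forall>b\<in>xi.twisted_Gp. F (a \<otimes> b) = F a \<otimes> F b"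
  have "lpm u (\<eta> v) = \<eta> (lmp (\<xi> u) v) \<and> u \<otimes> v = lmp (\<xi> u) v \<otimes> rpm u (\<eta> v)"
    if "u \<in> Gp" "v \<in> Gp" for u v
    using F_mult_iff[OF F_eq subgroup that] mult xi.twisted_Gp_memI mp_actions(1) that by simp
  then show "(\<forall>u\<in>Gp. \<forall>v\<in>Gp. lpm u (\<eta> v) = \<eta> (lmp (\<xi> u) v)) \<and>
    (\<forall>u\<in>Gp. \<forall>v\<in>Gp. u \<otimes> v = lmp (\<xi> u) v \<otimes> rpm u (\<eta> v))"
    by simp
next
  assume identities: "(\<forall>u\<in>Gp. \<forall>v\<in>Gp. lpm u (\<eta> v) = \<eta> (lmp (\<xi> u) v)) \<and>
    (\<forall>u\<in>Gp. \<forall>v\<in>Gp. u \<otimes> v = lmp (\<xi> u) v \<otimes> rpm u (\<eta> v))"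
  show "\<forall>a\<in>xi.twisted_Gp. \<forall>b\<in>xi.twisted_Gp. F (a \<otimes> b) = F a \<otimes> F b"
  proof (intro ballI)
    fix a b
    assume "a \<in> xi.twisted_Gp" "b \<in> xi.twisted_Gp"
    then obtain u v' where u: "u \<in> Gp" "a = u \<otimes> inv (\<xi> u)" and v': "v' \<in> Gp" "b = v' \<otimes> inv (\<xi> v')"
      by (auto elim!: xi.twisted_GpE)
    define v where "v = lmp (inv (\<xi> u)) v'"
    have v: "v \<in> Gp" "lmp (\<xi> u) v = v'"
      using mp_actions(1) lact_mp_lact_mp_inv u(1) v'(1) by (simp_all add: v_def)
    show "F (a \<otimes> b) = F a \<otimes> F b"
      using F_mult_iff[OF F_eq subgroup u(1) v(1)] identities u v v' by simp
  qed
qed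

lemma F_bij:
  assumes F_eq: "\<And>u. u \<in> Gp \<Longrightarrow> F (u \<otimes> inv (\<xi> u)) = \<eta> u \<otimes> inv u"
  shows "bij_betw F xi.twisted_Gp eta.cotwisted_Gp"
proof (rule bij_betw_imageI)
  show "inj_on F xi.twisted_Gp"
  proof (rule inj_onI)
    fix a b
    assume "a \<in> xi.twisted_Gp" "b \<in> xi.twisted_Gp" "F a = F b"
    then obtain u w where u: "u \<in> Gp" "a = u \<otimes> inv (\<xi> u)" and w: "w \<in> Gp" "b = w \<otimes> inv (\<xi> w)"
      and eq: "\<eta> u \<otimes> inv u = \<eta> w \<otimes> inv w"
      by (auto elim!: xi.twisted_GpE simp: F_eq)
    have "inv u = inv w"
      using factor_mp_unique(2)[OF _ _ _ _ eq] u w by simp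
    then show "a = b"
      using u w by simp
  qed
  show "F ` xi.twisted_Gp = eta.cotwisted_Gp"
  proof (intro equalityI subsetI)
    fix z
    assume "z \<in> F ` xi.twisted_Gp"
    then obtain u where "u \<in> Gp" "z = \<eta> (inv (inv u)) \<otimes> inv u"
      by (auto elim!: xi.twisted_GpE simp: F_eq)
    then show "z \<in> eta.cotwisted_Gp"
      unfolding eta.cotwisted_Gp_def by blast
  next
    fix z
    assume "z \<in> eta.cotwisted_Gp"
    then obtain u where u: "u \<in> Gp" "z = \<eta> (inv u) \<otimes> u"
      by (auto simp: eta.cotwisted_Gp_def)
    then have "z = F (inv u \<otimes> inv (\<xi> (inv u)))"
      using F_eq[of "inv u"] by simp
    then show "z \<in> F ` xi.twisted_Gp"
      using u xi.twisted_Gp_memI[of "inv u"] by blast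
  qed
qed

lemma F_iso_iff:
  assumes F_eq: "\<And>u. u \<in> Gp \<Longrightarrow> F (u \<otimes> inv (\<xi> u)) = \<eta> u \<otimes> inv u"
    and subgroup: "subgroup xi.twisted_Gp G"
  shows "F \<in> iso (G\<lparr>carrier := xi.twisted_Gp\<rparr>) (G\<lparr>carrier := eta.cotwisted_Gp\<rparr>) \<longleftrightarrow>
    (\<forall>u\<in>Gp. \<forall>v\<in>Gp. lpm u (\<eta> v) = \<eta> (lmp (\<xi> u) v)) \<and>
    (\<forall>u\<in>Gp. \<forall>v\<in>Gp. u \<otimes> v = lmp (\<xi> u) v \<otimes> rpm u (\<eta> v))"
  using F_bij[OF F_eq] bij_betw_imp_funcset[OF F_bij[OF F_eq]]
  by (simp add: iso_def hom_def F_mult_closed_iff[OF F_eq subgroup])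

lemma normal_iso_iff_identities:
  assumes F_eq: "\<And>u. u \<in> Gp \<Longrightarrow> F (u \<otimes> inv (\<xi> u)) = \<eta> u \<otimes> inv u"
  shows "(xi.twisted_Gp \<lhd> G \<and> eta.cotwisted_Gp \<lhd> G) \<and>
      F \<in> iso (G\<lparr>carrier := xi.twisted_Gp\<rparr>) (G\<lparr>carrier := eta.cotwisted_Gp\<rparr>) \<longleftrightarrow>
    (\<forall>u\<in>Gp. \<forall>v\<in>Gp. rmp (\<xi> u) v = \<xi> (rpm u (\<eta> v))) \<and>
    (\<forall>u\<in>Gp. \<forall>v\<in>Gp. lpm u (\<eta> v) = \<eta> (lmp (\<xi> u) v)) \<and>
    (\<forall>u\<in>Gp. \<forall>v\<in>Gp. u \<otimes> v = lmp (\<xi> u) v \<otimes> rpm u (\<eta> v)) \<and>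
    (\<forall>u\<in>Gp. \<forall>x\<in>Gm. \<xi> (lmp x u) \<otimes> rmp x u = x \<otimes> \<xi> u) \<and>
    (\<forall>u\<in>Gp. \<forall>x\<in>Gm. \<eta> (lmp x u) \<otimes> rmp x u = x \<otimes> \<eta> u)"
  (is "(?N1 \<and> ?N2) \<and> ?Iso \<longleftrightarrow> ?C1 \<and> ?C2 \<and> ?C3 \<and> ?C4 \<and> ?C5")
proof -
  have N1: "?N1 \<longleftrightarrow> ?C4"
    by (rule xi.twisted_Gp_normal_iff)
  have N2: "?N2 \<longleftrightarrow> ?C5"
    by (simp only: eta.cotwisted_Gp_normal_iff eta.twisted_Gp_normal_iff)
  have Iso: "?Iso \<longleftrightarrow> ?C2 \<and> ?C3" if ?N1
    by (rule F_iso_iff[OF F_eq normal_imp_subgroup[OF that]])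
  have C1: "?C1" if ?C3 ?C4
    by (rule xi_ract_mp_compat_if_mult_factor[OF that])
  show ?thesis
    using N1 N2 Iso C1 by argo
qed

end

theorem proposition1:
  fixes G (structure) and Gp Gm :: "'g set" and \<xi> \<eta> F :: "'g \<Rightarrow> 'g"
  assumes grp: "group G" and fin: "finite (carrier G)"
    and uf: "unique_factorization G Gp Gm"
    and xi_hom: "\<xi> \<in> hom (G\<lparr>carrier := Gp\<rparr>) (G\<lparr>carrier := Gm\<rparr>)"
    and eta_hom: "\<eta> \<in> hom (G\<lparr>carrier := Gp\<rparr>) (G\<lparr>carrier := Gm\<rparr>)"
    and F_def: "\<forall>u\<in>Gp. F (u \<otimes> \<xi> (inv u)) = \<eta> u \<otimes> inv u"
  shows
   "(let Gp' = {u \<otimes> \<xi> (inv u) | u. u \<in> Gp};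
         Gp'' = {\<eta> (inv u) \<otimes> u | u. u \<in> Gp}
     in ((Gp' \<lhd> G \<and> Gp'' \<lhd> G) \<and> F \<in> iso (G\<lparr>carrier := Gp'\<rparr>) (G\<lparr>carrier := Gp''\<rparr>))
     \<longleftrightarrow>
     ((\<forall>u\<in>Gp. \<forall>v\<in>Gp. ract_mp G Gp Gm (\<xi> u) v = \<xi> (ract_pm G Gp Gm u (\<eta> v))) \<and>
      (\<forall>u\<in>Gp. \<forall>v\<in>Gp. lact_pm G Gp Gm u (\<eta> v) = \<eta> (lact_mp G Gp Gm (\<xi> u) v)) \<and>
      (\<forall>u\<in>Gp. \<forall>v\<in>Gp. u \<otimes> v = lact_mp G Gp Gm (\<xi> u) v \<otimes> ract_pm G Gp Gm u (\<eta> v)) \<and>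
      (\<forall>u\<in>Gp. \<forall>x\<in>Gm. \<xi> (lact_mp G Gp Gm x u) \<otimes> ract_mp G Gp Gm x u = x \<otimes> \<xi> u) \<and>
      (\<forall>u\<in>Gp. \<forall>x\<in>Gm. \<eta> (lact_mp G Gp Gm x u) \<otimes> ract_mp G Gp Gm x u = x \<otimes> \<eta> u)))
   \<and>
   ((\<forall>u\<in>Gp. \<forall>v\<in>Gp. ract_mp G Gp Gm (\<xi> u) v = \<xi> (ract_pm G Gp Gm u (\<eta> v)))
      \<longleftrightarrow> (\<forall>u\<in>Gp. \<forall>v\<in>Gp. lact_pm G Gp Gm v (\<xi> u) = \<xi> (lact_mp G Gp Gm (\<eta> v) u)))
   \<and>
   ((\<forall>u\<in>Gp. \<forall>v\<in>Gp. lact_pm G Gp Gm u (\<eta> v) = \<eta> (lact_mp G Gp Gm (\<xi> u) v))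
      \<longleftrightarrow> (\<forall>u\<in>Gp. \<forall>v\<in>Gp. ract_mp G Gp Gm (\<eta> v) u = \<eta> (ract_pm G Gp Gm v (\<xi> u))))
   \<and>
   ((\<forall>u\<in>Gp. \<forall>v\<in>Gp. u \<otimes> v = lact_mp G Gp Gm (\<xi> u) v \<otimes> ract_pm G Gp Gm u (\<eta> v))
      \<longleftrightarrow> (\<forall>u\<in>Gp. \<forall>v\<in>Gp. u \<otimes> v = lact_mp G Gp Gm (\<eta> u) v \<otimes> ract_pm G Gp Gm u (\<xi> v)))
   \<and>
   ((\<forall>u\<in>Gp. \<forall>x\<in>Gm. \<xi> (lact_mp G Gp Gm x u) \<otimes> ract_mp G Gp Gm x u = x \<otimes> \<xi> u)
      \<longleftrightarrow> (\<forall>u\<in>Gp. \<forall>x\<in>Gm. lact_pm G Gp Gm u x \<otimes> \<xi> (ract_pm G Gp Gm u x) = \<xi> u \<otimes> x))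
   \<and>
   ((\<forall>u\<in>Gp. \<forall>x\<in>Gm. \<eta> (lact_mp G Gp Gm x u) \<otimes> ract_mp G Gp Gm x u = x \<otimes> \<eta> u)
      \<longleftrightarrow> (\<forall>u\<in>Gp. \<forall>x\<in>Gm. lact_pm G Gp Gm u x \<otimes> \<eta> (ract_pm G Gp Gm u x) = \<eta> u \<otimes> x))"
proof -
  interpret factorization_hom_pair G Gp Gm \<xi> \<eta>
    using grp uf xi_hom eta_hom
    by (simp add: factorization_hom_pair_def factorization_hom_pair_axioms_def
        factorization_def factorization_axioms_def)
  have F_eq: "F (u \<otimes> inv (\<xi> u)) = \<eta> u \<otimes> inv u" if "u \<in> Gp" for u
    using F_def that by simp
  show ?thesis
    unfolding Let_def xi.twisted_Gp_def [symmetric] eta.cotwisted_Gp_def [symmetric]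
    by (intro conjI normal_iso_iff_identities[OF F_eq] xi_ract_mp_compat_iff
        eta_lact_pm_compat_iff mult_factor_xi_eta_iff_eta_xi
        xi.phi_compat_mp_iff_pm eta.phi_compat_mp_iff_pm)
qed

end
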